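(* Let $(\mathcal{L},\mathcal{D}(\mathcal{L}))$ be the generator of a $C_0$-contraction semigroup on a Banach space $\mathcal{X}$ and $M\in\mathcal{B}(\mathcal{X})$ a contraction such that there is $\tilde c>0$ with $\|M^n-\sum_{j=1}^J\lambda_j^nP_j\|_\infty\le\tilde c\,\delta^n$ for all $n\in\mathbb{N}$, for projections $\{P_j\}_{j=1}^J$ with $P_jP_k=1_{j=k}P_j$, $|\lambda_j|=1$, and $\delta\in(0,1)$. Let $P_\Sigma=\sum_{j=1}^JP_j$, assume $M\mathcal{L}$ and $\mathcal{L}P_\Sigma$ are densely defined and bounded by $b\ge0$, $\|P_j\|_\infty=1$ for all $j\in\{1,\dots,J,\Sigma\}$, and put $c_p=\|\mathbf{1}-P_\Sigma\|_\infty$. Let $\tilde\delta\in(\delta,1)$. Then there are $\epsilon_1>0$ and $c_2\ge0$ such that for all $t\ge0$ and $n\in\mathbb{N}$ with $t\in[0,n\epsilon_1]$, $$\Big\|\big(Me^{\frac tn\mathcal{L}}\big)^n-\big(P_\Sigma Me^{\frac tn\mathcal{L}}P_\Sigma\big)^n\Big\|_\infty\le c_2\tilde\delta^n+\frac{tb}{n}+\frac1n\,\frac{tbc_pc_2(2+tbc_pc_2)(\tilde\delta-\tilde\delta^n)}{1-\tilde\delta}e^{2tbc_pc_2}.$$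
   Context: $\mathcal{B}(\mathcal{X})$: bounded operators with operator norm $\|\cdot\|_\infty$; $\mathbf{1}$ the identity; contraction: norm at most $1$; projection: bounded idempotent. A $C_0$-contraction semigroup is a strongly continuous semigroup of contractions, denoted $e^{t\mathcal{L}}$ by its generator. A densely defined operator bounded by $b$ is identified with its bounded extension to $\mathcal{X}$ of norm at most $b$. $1_{j=k}$ is $1$ if $j=k$ and $0$ otherwise. *)

theory Defs
  imports "HOL-Analysis.Analysis"
begin

class complex_vector = real_vector +
  fixes scaleC :: "complex \<Rightarrow> 'a \<Rightarrow> 'a"
  assumes scaleC_add_right: "scaleC a (x + y) = scaleC a x + scaleC a y"
    and scaleC_add_left: "scaleC (a + b) x = scaleC a x + scaleC b x"
    and scaleC_scaleC: "scaleC a (scaleC b x) = scaleC (a * b) x"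
    and scaleC_one: "scaleC 1 x = x"
    and scaleR_scaleC: "scaleR r x = scaleC (complex_of_real r) x"

class complex_normed_vector = complex_vector + real_normed_vector +
  assumes norm_scaleC: "norm (scaleC a x) = cmod a * norm x"

text \<open>Bounded (complex-)linear operators on X, i.e. elements of B(X);
  the operator norm is the library's onorm.\<close>

definition bop :: "('a::complex_normed_vector \<Rightarrow> 'a) \<Rightarrow> bool" where
  "bop f \<longleftrightarrow> bounded_linear f \<and> (\<forall>c x. f (scaleC c x) = scaleC c (f x))"

definition c0_contraction_semigroup :: "(real \<Rightarrow> 'a::complex_normed_vector \<Rightarrow> 'a) \<Rightarrow> bool" where
  "c0_contraction_semigroup T \<longleftrightarrow>
     T 0 = id \<and>
     (\<forall>s\<ge>0. \<forall>t\<ge>0. T (s + t) = T s \<circ> T t) \<and>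
     (\<forall>t\<ge>0. bop (T t) \<and> onorm (T t) \<le> 1) \<and>
     (\<forall>x. ((\<lambda>t. T t x) \<longlongrightarrow> x) (at_right 0))"

definition is_generator ::
  "(real \<Rightarrow> 'a::complex_normed_vector \<Rightarrow> 'a) \<Rightarrow> 'a set \<Rightarrow> ('a \<Rightarrow> 'a) \<Rightarrow> bool" where
  "is_generator T D L \<longleftrightarrow>
     D = {x. \<exists>y. ((\<lambda>h. (1 / h) *\<^sub>R (T h x - x)) \<longlongrightarrow> y) (at_right 0)} \<and>
     (\<forall>x\<in>D. ((\<lambda>h. (1 / h) *\<^sub>R (T h x - x)) \<longlongrightarrow> L x) (at_right 0))"

end

theory Submission
  imports Defs
begin

text \<open>Write \<open>M e\<^sup>s\<^sup>L = M + X\<close> with \<open>s = t/n\<close>. Since \<open>L\<close> commutes with the semigroup and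
  \<open>M L\<close> is bounded by \<open>b\<close>, a Riemann-sum argument gives \<open>\<parallel>X\<parallel> \<le> s b\<close>. The geometric convergence
  of \<open>M\<^sup>n\<close> to \<open>\<Sum>\<^sub>j \<lambda>\<^sub>j\<^sup>n P\<^sub>j\<close> forces \<open>M P\<^sub>j = \<lambda>\<^sub>j P\<^sub>j\<close>; hence \<open>P\<^sub>\<Sigma>\<close> is idempotent,
  \<open>P\<^sub>\<Sigma> M P\<^sub>\<Sigma> = M P\<^sub>\<Sigma>\<close> and \<open>\<parallel>M\<^sup>n (1 - P\<^sub>\<Sigma>)\<parallel> = O(c\<^sub>p \<delta>\<^sup>n)\<close>. Expanding \<open>(M + X)\<^sup>n\<close> and its
  compression \<open>(P\<^sub>\<Sigma> (M + X) P\<^sub>\<Sigma>)\<^sup>n\<close> by Duhamel's formula, the difference obeys a discrete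
  Gronwall recursion solved by \<open>c\<^sub>p (C \<delta>\<^sup>n + 2C/(1-\<delta>) \<beta> (1+\<beta>)\<^sup>n)\<close> with \<open>\<beta> = s b\<close>.
  Finally \<open>(1+\<beta>)\<^sup>n \<le> e\<^sup>t\<^sup>b\<close>, and \<open>c\<^sub>p\<close> is either \<open>0\<close> or at least \<open>1\<close> because \<open>1 - P\<^sub>\<Sigma>\<close> is
  idempotent, so a single constant \<open>c\<^sub>2\<close> absorbs everything.\<close>

section \<open>Powers of a perturbed compression\<close>

lemma bounded_linear_funpow:
  fixes f :: "'a::real_normed_vector \<Rightarrow> 'a"
  assumes "bounded_linear f"
  shows "bounded_linear (f ^^ n)"
proof (induction n)
  case 0
  show ?case using bounded_linear_ident by (simp add: id_def)
next
  case (Suc n)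
  show ?case using bounded_linear_compose[OF assms Suc] by (simp add: comp_def)
qed

lemma norm_funpow_le:
  fixes F :: "'a::real_normed_vector \<Rightarrow> 'a"
  assumes "\<And>y. norm (F y) \<le> norm y"
  shows "norm ((F ^^ k) y) \<le> norm y"
proof (induction k)
  case 0
  show ?case by simp
next
  case (Suc k)
  show ?case using order_trans[OF assms Suc] by simp
qed

lemma onorm_le_imp_norm_le:
  assumes "bounded_linear f" and "onorm f \<le> c"
  shows "norm (f x) \<le> c * norm x"
  using onorm[OF assms(1), of x] mult_right_mono[OF assms(2) norm_ge_zero[of x]] by linarith

lemma onorm_idempotent:
  assumes "bounded_linear Q" and "\<And>x. Q (Q x) = Q x"
  shows "onorm Q = 0 \<or> 1 \<le> onorm Q"
proof (cases "\<exists>x. Q x \<noteq> 0")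
  case True
  then obtain x where "Q x \<noteq> 0" by blast
  moreover have "norm (Q x) \<le> onorm Q * norm (Q x)"
    using onorm[OF assms(1), of "Q x"] assms(2) by simp
  ultimately show ?thesis by simp
next
  case False
  then have "Q = (\<lambda>x. 0)" by auto
  then show ?thesis by (simp add: onorm_zero)
qed

lemma funpow_duhamel:
  fixes F G Y :: "'a::real_normed_vector \<Rightarrow> 'a"
  assumes F: "bounded_linear F" and FGY: "\<And>y. F y = G y + Y y"
  shows "(F ^^ n) y = (G ^^ n) y + (\<Sum>k<n. (F ^^ k) (Y ((G ^^ (n - 1 - k)) y)))"
proof (induction n)
  case 0
  show ?case by simp
next
  case (Suc n)
  have "(F ^^ Suc n) y = F ((G ^^ n) y) + (\<Sum>k<n. F ((F ^^ k) (Y ((G ^^ (n - 1 - k)) y))))"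
    by (simp add: Suc linear_add linear_sum bounded_linear.linear[OF F])
  also have "\<dots> = (G ^^ Suc n) y + Y ((G ^^ n) y)
      + (\<Sum>k<n. (F ^^ Suc k) (Y ((G ^^ (Suc n - 1 - Suc k)) y)))"
    by (simp add: FGY)
  also have "\<dots> = (G ^^ Suc n) y + (\<Sum>k<Suc n. (F ^^ k) (Y ((G ^^ (Suc n - 1 - k)) y)))"
    unfolding sum.lessThan_Suc_shift by (simp del: funpow.simps)
  finally show ?case .
qed

lemma funpow_preserves_range:
  fixes M P :: "'a \<Rightarrow> 'a"
  assumes "\<And>y. P (P y) = P y" and "\<And>y. P (M (P y)) = M (P y)"
  shows "P ((M ^^ j) (P y)) = (M ^^ j) (P y)"
proof (induction j)
  case 0
  show ?case using assms(1) by simp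
next
  case (Suc j)
  show ?case using assms(2)[of "(M ^^ j) (P y)"] by (simp add: Suc)
qed

lemma funpow_compression_on_range:
  fixes M P :: "'a \<Rightarrow> 'a"
  assumes "\<And>y. P (P y) = P y" and "\<And>y. P (M (P y)) = M (P y)"
  shows "((\<lambda>y. M (P y)) ^^ j) (P y) = (M ^^ j) (P y)"
  by (induction j) (simp_all add: funpow_preserves_range[of P M, OF assms])

lemma compression_funpow_diff_expansion:
  fixes A M X P :: "'a::real_normed_vector \<Rightarrow> 'a"
  assumes A: "bounded_linear A" and X: "bounded_linear X" and P: "bounded_linear P"
    and AMX: "\<And>y. A y = M y + X y"
    and PP: "\<And>y. P (P y) = P y" and PMP: "\<And>y. P (M (P y)) = M (P y)"
  defines "B \<equiv> \<lambda>y. P (A (P y))"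
  shows "(A ^^ n) w - (B ^^ n) (P w) = ((M ^^ n) w - (M ^^ n) (P w))
    + (\<Sum>k<n. (A ^^ k) (X ((M ^^ (n - 1 - k)) w - (M ^^ (n - 1 - k)) (P w)))
        + ((A ^^ k) (X ((M ^^ (n - 1 - k)) (P w))) - (B ^^ k) (P (X ((M ^^ (n - 1 - k)) (P w))))))"
proof -
  have B: "bounded_linear B"
    unfolding B_def by (intro bounded_linear_compose[OF P] bounded_linear_compose[OF A] P)
  have "B y = M (P y) + P (X (P y))" for y
    by (simp add: B_def AMX linear_add[OF bounded_linear.linear[OF P]] PMP)
  from funpow_duhamel[OF B this, of n "P w"]
  have dB: "(B ^^ n) (P w) = (M ^^ n) (P w)
      + (\<Sum>k<n. (B ^^ k) (P (X ((M ^^ (n - 1 - k)) (P w)))))"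
    unfolding funpow_compression_on_range[of P M, OF PP PMP] funpow_preserves_range[of P M, OF PP PMP] .
  have dA: "(A ^^ n) w = (M ^^ n) w + (\<Sum>k<n. (A ^^ k) (X ((M ^^ (n - 1 - k)) w)))"
    by (rule funpow_duhamel[OF A AMX])
  have split: "(A ^^ k) (X ((M ^^ j) w)) = (A ^^ k) (X ((M ^^ j) w - (M ^^ j) (P w)))
      + (A ^^ k) (X ((M ^^ j) (P w)))" for k j
    using linear_add[OF bounded_linear.linear[OF bounded_linear_funpow[OF A]]]
      linear_diff[OF bounded_linear.linear[OF X]] by (metis diff_add_cancel)
  show ?thesis
    unfolding dA dB split by (simp add: sum_subtractf[symmetric] sum.distrib[symmetric] add_diff_eq)
qed

lemma sum_times_one_plus_power:
  fixes \<beta> :: real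
  shows "(\<Sum>k<n. \<beta> * (1 + \<beta>) ^ k) = (1 + \<beta>) ^ n - 1"
  by (induction n) (simp_all add: algebra_simps)

lemma compression_error_recursion:
  fixes K \<delta> \<beta> :: real
  assumes K: "0 \<le> K" and \<delta>: "0 \<le> \<delta>" "\<delta> < 1" and \<beta>: "0 \<le> \<beta>"
  defines "e \<equiv> \<lambda>k. K * \<delta> ^ k + 2 * K / (1 - \<delta>) * \<beta> * (1 + \<beta>) ^ k"
  shows "K * \<delta> ^ n + (\<Sum>k<n. \<beta> * K * \<delta> ^ (n - 1 - k) + \<beta> * e k) \<le> e n"
proof -
  define R where "R = 2 * K / (1 - \<delta>)"
  define S where "S = (\<Sum>k<n. \<delta> ^ k)"
  have e_R: "e k = K * \<delta> ^ k + R * \<beta> * (1 + \<beta>) ^ k" for k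
    by (simp add: e_def R_def)
  have "S = (1 - \<delta> ^ n) / (1 - \<delta>)"
    using \<delta> by (simp add: S_def sum_gp_strict)
  also have "\<dots> \<le> 1 / (1 - \<delta>)"
    using \<delta> by (simp add: divide_right_mono)
  finally have "\<beta> * K * S \<le> \<beta> * K * (1 / (1 - \<delta>))"
    using K \<beta> by (intro mult_left_mono) simp_all
  moreover have "R * \<beta> = 2 * (\<beta> * K * (1 / (1 - \<delta>)))"
    by (simp add: R_def)
  ultimately have geometric: "2 * (\<beta> * K * S) \<le> R * \<beta>"
    by linarith
  have "(\<Sum>k<n. \<delta> ^ (n - 1 - k)) = S"
    unfolding S_def using sum.nat_diff_reindex[of "\<lambda>k. \<delta> ^ k" n] by simp
  moreover have "(\<Sum>k<n. \<beta> * K * \<delta> ^ (n - 1 - k) + \<beta> * e k)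
      = \<beta> * K * (\<Sum>k<n. \<delta> ^ (n - 1 - k)) + \<beta> * K * S + R * \<beta> * (\<Sum>k<n. \<beta> * (1 + \<beta>) ^ k)"
    by (simp add: e_R S_def sum.distrib sum_distrib_left algebra_simps)
  ultimately have "K * \<delta> ^ n + (\<Sum>k<n. \<beta> * K * \<delta> ^ (n - 1 - k) + \<beta> * e k)
      = K * \<delta> ^ n + 2 * (\<beta> * K * S) + R * \<beta> * (1 + \<beta>) ^ n - R * \<beta>"
    by (simp add: sum_times_one_plus_power algebra_simps)
  with geometric show ?thesis
    by (simp add: e_R)
qed

text \<open>The error is measured against the compression applied to \<open>P w\<close>: for \<open>n = 0\<close> it is then
  \<open>w - P w\<close>, which the spectral gap controls, and the recursion is uniform in \<open>n\<close>.\<close>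

lemma norm_compression_funpow_diff_le:
  fixes A M X P :: "'a::real_normed_vector \<Rightarrow> 'a"
  assumes A: "bounded_linear A" and X: "bounded_linear X" and P: "bounded_linear P"
    and AMX: "\<And>y. A y = M y + X y"
    and PP: "\<And>y. P (P y) = P y" and PMP: "\<And>y. P (M (P y)) = M (P y)"
    and A_contr: "\<And>y. norm (A y) \<le> norm y" and M_contr: "\<And>y. norm (M y) \<le> norm y"
    and P_contr: "\<And>y. norm (P y) \<le> norm y"
    and X_le: "\<And>y. norm (X y) \<le> \<beta> * norm y"
    and gap: "\<And>j y. norm ((M ^^ j) y - (M ^^ j) (P y)) \<le> K * \<delta> ^ j * norm y"
    and K: "0 \<le> K" and \<delta>: "0 \<le> \<delta>" "\<delta> < 1" and \<beta>: "0 \<le> \<beta>"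
  shows "norm ((A ^^ n) w - ((\<lambda>y. P (A (P y))) ^^ n) (P w))
    \<le> (K * \<delta> ^ n + 2 * K / (1 - \<delta>) * \<beta> * (1 + \<beta>) ^ n) * norm w"
proof (induction n arbitrary: w rule: less_induct)
  case (less n)
  define B where "B = (\<lambda>y. P (A (P y)))"
  define D where "D k v = (A ^^ k) v - (B ^^ k) (P v)" for k v
  define Q where "Q j = (M ^^ j) w - (M ^^ j) (P w)" for j
  define v where "v j = X ((M ^^ j) (P w))" for j
  define e where "e k = K * \<delta> ^ k + 2 * K / (1 - \<delta>) * \<beta> * (1 + \<beta>) ^ k" for k
  have IH: "norm (D k u) \<le> e k * norm u" if "k < n" for k u
    using less[OF that] by (simp add: D_def B_def e_def)
  have "0 \<le> e k" for k
    using K \<delta> \<beta> by (simp add: e_def)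
  have expansion: "D n w = Q n + (\<Sum>k<n. (A ^^ k) (X (Q (n - 1 - k))) + D k (v (n - 1 - k)))"
    unfolding D_def Q_def v_def B_def by (rule compression_funpow_diff_expansion[OF A X P AMX PP PMP])
  have Q_le: "norm (Q j) \<le> K * \<delta> ^ j * norm w" for j
    unfolding Q_def by (rule gap)
  have gap_term: "norm ((A ^^ k) (X (Q j))) \<le> \<beta> * K * \<delta> ^ j * norm w" for k j
  proof -
    have "norm ((A ^^ k) (X (Q j))) \<le> \<beta> * norm (Q j)"
      using norm_funpow_le[OF A_contr] X_le order_trans by blast
    also have "\<dots> \<le> \<beta> * (K * \<delta> ^ j * norm w)"
      using Q_le \<beta> by (rule mult_left_mono)
    finally show ?thesis by (simp add: mult.assoc)
  qed
  have recursive_term: "norm (D k (v j)) \<le> \<beta> * e k * norm w" if "k < n" for k j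
  proof -
    have "norm (v j) \<le> \<beta> * norm w"
      unfolding v_def using X_le[of "(M ^^ j) (P w)"] norm_funpow_le[OF M_contr, of j "P w"]
        P_contr[of w] \<beta> by (meson order_trans mult_left_mono)
    then have "e k * norm (v j) \<le> e k * (\<beta> * norm w)"
      using \<open>0 \<le> e k\<close> by (rule mult_left_mono)
    with IH[OF that, of "v j"] show ?thesis
      by (simp add: algebra_simps)
  qed
  have "norm ((A ^^ k) (X (Q (n - 1 - k))) + D k (v (n - 1 - k)))
      \<le> \<beta> * K * \<delta> ^ (n - 1 - k) * norm w + \<beta> * e k * norm w" if "k \<in> {..<n}" for k
    using that by (intro order_trans[OF norm_triangle_ineq] add_mono gap_term recursive_term) simp
  then have "norm (\<Sum>k<n. (A ^^ k) (X (Q (n - 1 - k))) + D k (v (n - 1 - k)))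
      \<le> (\<Sum>k<n. \<beta> * K * \<delta> ^ (n - 1 - k) * norm w + \<beta> * e k * norm w)"
    by (intro order_trans[OF norm_sum] sum_mono)
  then have "norm (D n w)
      \<le> K * \<delta> ^ n * norm w + (\<Sum>k<n. \<beta> * K * \<delta> ^ (n - 1 - k) * norm w + \<beta> * e k * norm w)"
    unfolding expansion using Q_le[of n] by (intro order_trans[OF norm_triangle_ineq] add_mono)
  also have "\<dots> = (K * \<delta> ^ n + (\<Sum>k<n. \<beta> * K * \<delta> ^ (n - 1 - k) + \<beta> * e k)) * norm w"
    by (simp add: sum_distrib_left sum_distrib_right algebra_simps)
  also have "\<dots> \<le> e n * norm w"
    unfolding e_def by (intro mult_right_mono compression_error_recursion K \<delta> \<beta> norm_ge_zero)
  finally show ?case by (simp add: D_def B_def e_def)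
qed

lemma onorm_compression_funpow_diff_le:
  fixes A M X P :: "'a::real_normed_vector \<Rightarrow> 'a"
  assumes A: "bounded_linear A" and X: "bounded_linear X" and P: "bounded_linear P"
    and AMX: "\<And>y. A y = M y + X y"
    and PP: "\<And>y. P (P y) = P y" and PMP: "\<And>y. P (M (P y)) = M (P y)"
    and A_contr: "\<And>y. norm (A y) \<le> norm y" and M_contr: "\<And>y. norm (M y) \<le> norm y"
    and P_contr: "\<And>y. norm (P y) \<le> norm y"
    and X_le: "\<And>y. norm (X y) \<le> \<beta> * norm y"
    and gap: "\<And>j y. norm ((M ^^ j) y - (M ^^ j) (P y)) \<le> K * \<delta> ^ j * norm y"
    and K: "0 \<le> K" and \<delta>: "0 \<le> \<delta>" "\<delta> < 1" and \<beta>: "0 \<le> \<beta>"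
    and n: "1 \<le> n"
  shows "onorm (\<lambda>w. (A ^^ n) w - ((P \<circ> A \<circ> P) ^^ n) w)
    \<le> K * \<delta> ^ n + 2 * K / (1 - \<delta>) * \<beta> * (1 + \<beta>) ^ n"
proof (rule onorm_bound)
  show "0 \<le> K * \<delta> ^ n + 2 * K / (1 - \<delta>) * \<beta> * (1 + \<beta>) ^ n"
    using K \<delta> \<beta> by simp
  obtain m where m: "n = Suc m"
    using n by (cases n) auto
  have "((P \<circ> A \<circ> P) ^^ n) (P w) = ((P \<circ> A \<circ> P) ^^ n) w" for w
    unfolding m funpow_Suc_right by (simp add: PP)
  then show "norm ((A ^^ n) w - ((P \<circ> A \<circ> P) ^^ n) w)
      \<le> (K * \<delta> ^ n + 2 * K / (1 - \<delta>) * \<beta> * (1 + \<beta>) ^ n) * norm w" for w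
    using norm_compression_funpow_diff_le[OF A X P AMX PP PMP A_contr M_contr P_contr X_le gap K \<delta> \<beta>,
        of n w]
    by (simp add: comp_def)
qed

section \<open>Spectral projections\<close>

lemma bounded_linear_scaleC: "bounded_linear (scaleC c :: 'a::complex_normed_vector \<Rightarrow> 'a)"
proof (rule bounded_linear_intro[where K = "cmod c"])
  show "scaleC c (x + y) = scaleC c x + scaleC c y" for x y :: 'a
    by (rule scaleC_add_right)
  show "scaleC c (r *\<^sub>R x) = r *\<^sub>R scaleC c x" for r and x :: 'a
    by (simp add: scaleR_scaleC scaleC_scaleC mult.commute)
  show "norm (scaleC c x) \<le> norm x * cmod c" for x :: 'a
    by (simp add: norm_scaleC mult.commute)
qed

lemma scaleC_zero [simp]: "scaleC c (0 :: 'a::complex_normed_vector) = 0"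
  by (rule linear_0[OF bounded_linear.linear[OF bounded_linear_scaleC]])

lemma orthogonal_projections_apply:
  fixes P :: "nat \<Rightarrow> 'a \<Rightarrow> 'a::zero"
  assumes orth: "\<forall>j\<in>{1..J}. \<forall>k\<in>{1..J}. P j \<circ> P k = (if j = k then P j else (\<lambda>x. 0))"
    and "j \<in> {1..J}" "k \<in> {1..J}"
  shows "P j (P k x) = (if j = k then P j x else 0)"
  using orth assms(2,3) by (metis comp_apply)

lemma orthogonal_projection_absorbs_sum:
  fixes P :: "nat \<Rightarrow> 'a::real_normed_vector \<Rightarrow> 'a"
  assumes P: "\<And>j. j \<in> {1..J} \<Longrightarrow> bounded_linear (P j)"
    and orth: "\<forall>j\<in>{1..J}. \<forall>k\<in>{1..J}. P j \<circ> P k = (if j = k then P j else (\<lambda>x. 0))"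
    and j: "j \<in> {1..J}"
  shows "P j (\<Sum>k=1..J. P k (z k)) = P j (z j)"
proof -
  have "P j (\<Sum>k=1..J. P k (z k)) = (\<Sum>k=1..J. P j (P k (z k)))"
    by (rule linear_sum[OF bounded_linear.linear[OF P[OF j]]])
  also have "\<dots> = (\<Sum>k=1..J. if k = j then P j (z j) else 0)"
    by (rule sum.cong) (auto simp: orthogonal_projections_apply[OF orth j])
  also have "\<dots> = P j (z j)"
    using j by (simp add: sum.delta)
  finally show ?thesis .
qed

lemma sum_orthogonal_projections_idem:
  fixes P :: "nat \<Rightarrow> 'a::real_normed_vector \<Rightarrow> 'a"
  assumes P: "\<And>j. j \<in> {1..J} \<Longrightarrow> bounded_linear (P j)"
    and orth: "\<forall>j\<in>{1..J}. \<forall>k\<in>{1..J}. P j \<circ> P k = (if j = k then P j else (\<lambda>x. 0))"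
  shows "(\<Sum>j=1..J. P j (\<Sum>k=1..J. P k y)) = (\<Sum>j=1..J. P j y)"
  by (rule sum.cong[OF refl]) (rule orthogonal_projection_absorbs_sum[OF P orth, where z = "\<lambda>_. y"])

text \<open>If \<open>M\<^sup>n\<close> approaches \<open>\<Sum>\<^sub>j \<lambda>\<^sub>j\<^sup>n P\<^sub>j\<close> geometrically, then
  \<open>\<lambda>\<^sub>k\<^sup>n (M - \<lambda>\<^sub>k) P\<^sub>k = M (\<lambda>\<^sub>k\<^sup>n - M\<^sup>n) P\<^sub>k + (M\<^sup>n\<^sup>+\<^sup>1 - \<lambda>\<^sub>k\<^sup>n\<^sup>+\<^sup>1) P\<^sub>k\<close>
  is as small as we like, while \<open>|\<lambda>\<^sub>k\<^sup>n| = 1\<close>.\<close>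

lemma spectral_projection_eigen:
  fixes M :: "'a::complex_normed_vector \<Rightarrow> 'a" and P :: "nat \<Rightarrow> 'a \<Rightarrow> 'a"
  assumes M: "bop M" and M_contr: "\<And>x. norm (M x) \<le> norm x"
    and P: "\<And>j. j \<in> {1..J} \<Longrightarrow> bounded_linear (P j)"
    and orth: "\<forall>j\<in>{1..J}. \<forall>k\<in>{1..J}. P j \<circ> P k = (if j = k then P j else (\<lambda>x. 0))"
    and spec: "\<And>n x. n \<ge> 1 \<Longrightarrow>
      norm ((M ^^ n) x - (\<Sum>j=1..J. scaleC (lam j ^ n) (P j x))) \<le> c * \<delta> ^ n * norm x"
    and c: "0 \<le> c" and \<delta>: "0 \<le> \<delta>" "\<delta> < 1"
    and k: "k \<in> {1..J}" and lam: "cmod (lam k) = 1"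
  shows "M (P k y) = scaleC (lam k) (P k y)"
proof -
  define z where "z = P k y"
  have M_lin: "linear M"
    using M by (simp add: bop_def bounded_linear.linear)
  have "(\<Sum>j=1..J. scaleC (lam j ^ n) (P j z)) = (\<Sum>j=1..J. if j = k then scaleC (lam k ^ n) z else 0)"
    for n
    by (rule sum.cong) (simp_all add: z_def orthogonal_projections_apply[OF orth _ k])
  then have approx: "norm ((M ^^ n) z - scaleC (lam k ^ n) z) \<le> c * \<delta> ^ n * norm z" if "n \<ge> 1" for n
    using spec[OF that, of z] k by (simp add: sum.delta')
  have small: "norm (M z - scaleC (lam k) z) \<le> 2 * c * norm z * \<delta> ^ n" if "n \<ge> 1" for n
  proof -
    have "norm (M z - scaleC (lam k) z) = norm (scaleC (lam k ^ n) (M z - scaleC (lam k) z))"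
      using lam by (simp add: norm_scaleC norm_power)
    also have "scaleC (lam k ^ n) (M z - scaleC (lam k) z)
        = M (scaleC (lam k ^ n) z - (M ^^ n) z) + ((M ^^ Suc n) z - scaleC (lam k ^ Suc n) z)"
      using M by (simp add: bop_def linear_diff[OF M_lin]
          linear_diff[OF bounded_linear.linear[OF bounded_linear_scaleC]] scaleC_scaleC mult.commute)
    also have "norm \<dots> \<le> norm (scaleC (lam k ^ n) z - (M ^^ n) z) + c * \<delta> ^ Suc n * norm z"
      using approx[of "Suc n"] by (intro order_trans[OF norm_triangle_ineq] add_mono M_contr) simp_all
    also have "\<dots> \<le> c * \<delta> ^ n * norm z + c * \<delta> ^ n * norm z"
    proof (rule add_mono)
      show "norm (scaleC (lam k ^ n) z - (M ^^ n) z) \<le> c * \<delta> ^ n * norm z"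
        using approx[OF that] by (simp add: norm_minus_commute)
      show "c * \<delta> ^ Suc n * norm z \<le> c * \<delta> ^ n * norm z"
        using c \<delta> by (intro mult_right_mono mult_left_mono power_decreasing) simp_all
    qed
    finally show ?thesis by simp
  qed
  have "(\<lambda>n. 2 * c * norm z * \<delta> ^ n) \<longlonglongrightarrow> 0"
    using \<delta> by (intro tendsto_mult_right_zero LIMSEQ_power_zero) simp
  then have "norm (M z - scaleC (lam k) z) \<le> 0"
    using small by (intro LIMSEQ_le_const) auto
  then show ?thesis by (simp add: z_def)
qed

lemma sum_projections_eigen_invariant:
  fixes P :: "nat \<Rightarrow> 'a::real_normed_vector \<Rightarrow> 'a"
  assumes P: "\<And>j. j \<in> {1..J} \<Longrightarrow> bounded_linear (P j)"
    and orth: "\<forall>j\<in>{1..J}. \<forall>k\<in>{1..J}. P j \<circ> P k = (if j = k then P j else (\<lambda>x. 0))"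
    and M: "linear M" and eigen: "\<And>k x. k \<in> {1..J} \<Longrightarrow> M (P k x) = P k (f k x)"
  shows "(\<Sum>j=1..J. P j (M (\<Sum>k=1..J. P k y))) = M (\<Sum>k=1..J. P k y)"
proof -
  have M_sum: "M (\<Sum>k=1..J. P k y) = (\<Sum>k=1..J. P k (f k y))"
    by (simp add: linear_sum[OF M] eigen)
  show ?thesis
    unfolding M_sum
    by (rule sum.cong[OF refl]) (rule orthogonal_projection_absorbs_sum[OF P orth, where z = "\<lambda>k. f k y"])
qed

text \<open>\<open>(1 - P\<^sub>\<Sigma>) y\<close> is annihilated by every \<open>P\<^sub>j\<close>, so the spectral estimate applies to it
  directly.\<close>

lemma spectral_gap_on_complement:
  fixes M :: "'a::complex_normed_vector \<Rightarrow> 'a" and P :: "nat \<Rightarrow> 'a \<Rightarrow> 'a"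
  assumes M: "bounded_linear M" and P: "\<And>j. j \<in> {1..J} \<Longrightarrow> bounded_linear (P j)"
    and orth: "\<forall>j\<in>{1..J}. \<forall>k\<in>{1..J}. P j \<circ> P k = (if j = k then P j else (\<lambda>x. 0))"
    and spec: "\<And>n x. n \<ge> 1 \<Longrightarrow>
      norm ((M ^^ n) x - (\<Sum>j=1..J. scaleC (lam j ^ n) (P j x))) \<le> c * \<delta> ^ n * norm x"
    and \<delta>: "0 \<le> \<delta>"
  shows "norm ((M ^^ n) y - (M ^^ n) (\<Sum>j=1..J. P j y))
    \<le> max c 1 * \<delta> ^ n * norm (y - (\<Sum>j=1..J. P j y))"
proof (cases "n = 0")
  case True
  then show ?thesis
    using mult_right_mono[of 1 "max c 1" "norm (y - (\<Sum>j=1..J. P j y))"] by simp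
next
  case False
  define u where "u = y - (\<Sum>j=1..J. P j y)"
  have "P j u = 0" if "j \<in> {1..J}" for j
    using orthogonal_projection_absorbs_sum[OF P orth that, where z = "\<lambda>_. y"]
    by (simp add: u_def linear_diff[OF bounded_linear.linear[OF P[OF that]]])
  then have "(\<Sum>j=1..J. scaleC (lam j ^ n) (P j u)) = 0"
    by simp
  moreover have "(M ^^ n) y - (M ^^ n) (\<Sum>j=1..J. P j y) = (M ^^ n) u"
    by (simp add: u_def linear_diff[OF bounded_linear.linear[OF bounded_linear_funpow[OF M]]])
  ultimately have "norm ((M ^^ n) y - (M ^^ n) (\<Sum>j=1..J. P j y)) \<le> c * \<delta> ^ n * norm u"
    using spec[of n u] False by simp
  also have "\<dots> \<le> max c 1 * \<delta> ^ n * norm u"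
    using \<delta> by (intro mult_right_mono) simp_all
  finally show ?thesis by (simp add: u_def)
qed

section \<open>Perturbation by the semigroup\<close>

lemma c0_contraction_semigroupD:
  assumes "c0_contraction_semigroup T"
  shows "T 0 x = x"
    and "0 \<le> s \<Longrightarrow> 0 \<le> t \<Longrightarrow> T (s + t) x = T s (T t x)"
    and "0 \<le> t \<Longrightarrow> bounded_linear (T t)"
    and "0 \<le> t \<Longrightarrow> norm (T t x) \<le> norm x"
  using assms onorm_le_imp_norm_le[of "T t" 1 x]
  by (auto simp: c0_contraction_semigroup_def bop_def)

lemma generator_semigroup_commute:
  assumes sg: "c0_contraction_semigroup T" and gen: "is_generator T D L"
    and y: "y \<in> D" and r: "0 \<le> r"
  shows "T r y \<in> D" and "L (T r y) = T r (L y)"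
proof -
  have T_lin: "linear (T r)"
    using c0_contraction_semigroupD(3)[OF sg r] by (rule bounded_linear.linear)
  have "((\<lambda>h. (1 / h) *\<^sub>R (T h y - y)) \<longlongrightarrow> L y) (at_right 0)"
    using gen y by (simp add: is_generator_def)
  from bounded_linear.tendsto[OF c0_contraction_semigroupD(3)[OF sg r] this]
  have "((\<lambda>h. T r ((1 / h) *\<^sub>R (T h y - y))) \<longlongrightarrow> T r (L y)) (at_right 0)" .
  moreover have "\<forall>\<^sub>F h in at_right 0. T r ((1 / h) *\<^sub>R (T h y - y)) = (1 / h) *\<^sub>R (T h (T r y) - T r y)"
  proof (rule eventually_mono[OF eventually_at_right_less])
    fix h :: real assume "0 < h"
    then show "T r ((1 / h) *\<^sub>R (T h y - y)) = (1 / h) *\<^sub>R (T h (T r y) - T r y)"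
      using r c0_contraction_semigroupD(2)[OF sg, of h r y] c0_contraction_semigroupD(2)[OF sg, of r h y]
      by (simp add: linear_scale[OF T_lin] linear_diff[OF T_lin] add.commute)
  qed
  ultimately have lim: "((\<lambda>h. (1 / h) *\<^sub>R (T h (T r y) - T r y)) \<longlongrightarrow> T r (L y)) (at_right 0)"
    using tendsto_cong by fastforce
  then show D: "T r y \<in> D"
    using gen by (auto simp: is_generator_def)
  have "((\<lambda>h. (1 / h) *\<^sub>R (T h (T r y) - T r y)) \<longlongrightarrow> L (T r y)) (at_right 0)"
    using gen D by (simp add: is_generator_def)
  with lim show "L (T r y) = T r (L y)"
    using tendsto_unique[OF trivial_limit_at_right_real] by blast
qed

lemma norm_comp_semigroup_near_generator:
  assumes sg: "c0_contraction_semigroup T" and gen: "is_generator T D L"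
    and M: "bounded_linear M" and M_contr: "\<And>x. norm (M x) \<le> norm x"
    and bound_ML: "\<forall>x\<in>D. norm (M (L x)) \<le> b * norm x" and b: "0 \<le> b"
    and y: "y \<in> D" and r: "0 \<le> r"
  shows "norm (M (T r v)) \<le> b * norm y + norm (v - L y)"
proof -
  have "M (T r v) = M (L (T r y)) + M (T r (v - L y))"
    using generator_semigroup_commute(2)[OF sg gen y r] c0_contraction_semigroupD(3)[OF sg r] M
    by (simp add: linear_diff bounded_linear.linear)
  moreover have "norm (M (L (T r y))) \<le> b * norm y"
    using bound_ML generator_semigroup_commute(1)[OF sg gen y r] c0_contraction_semigroupD(4)[OF sg r, of y] b
    by (meson mult_left_mono order_trans)
  moreover have "norm (M (T r (v - L y))) \<le> norm (v - L y)"
    using M_contr c0_contraction_semigroupD(4)[OF sg r] by (rule order_trans)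
  ultimately show ?thesis
    by (metis add_mono norm_triangle_ineq order_trans)
qed

lemma norm_comp_semigroup_diff_riemann:
  fixes T :: "real \<Rightarrow> 'a::complex_normed_vector \<Rightarrow> 'a" and N :: nat
  assumes sg: "c0_contraction_semigroup T" and gen: "is_generator T D L"
    and M: "bounded_linear M" and M_contr: "\<And>x. norm (M x) \<le> norm x"
    and bound_ML: "\<forall>x\<in>D. norm (M (L x)) \<le> b * norm x" and b: "0 \<le> b"
    and y: "y \<in> D" and h: "0 < h"
  shows "norm (M (T (real N * h) y) - M y)
    \<le> real N * h * (b * norm y + norm ((1 / h) *\<^sub>R (T h y - y) - L y))"
proof -
  define q where "q = (1 / h) *\<^sub>R (T h y - y)"
  have ih: "0 \<le> real i * h" for i
    using h by simp
  have T_lin: "linear (T (real i * h))" for i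
    using c0_contraction_semigroupD(3)[OF sg ih] by (rule bounded_linear.linear)
  have M_lin: "linear M"
    using M by (rule bounded_linear.linear)
  have step: "T (real (Suc i) * h) y - T (real i * h) y = h *\<^sub>R T (real i * h) q" for i
  proof -
    have "h *\<^sub>R T (real i * h) q = T (real i * h) (h *\<^sub>R q)"
      by (simp add: linear_scale[OF T_lin])
    also have "\<dots> = T (real i * h) (T h y) - T (real i * h) y"
      using h by (simp add: q_def linear_diff[OF T_lin])
    also have "\<dots> = T (real (Suc i) * h) y - T (real i * h) y"
      using c0_contraction_semigroupD(2)[OF sg ih[of i], of h y] h by (simp add: distrib_right add.commute)
    finally show ?thesis ..
  qed
  have "M (T (real N * h) y) - M y = (\<Sum>i<N. M (T (real (Suc i) * h) y - T (real i * h) y))"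
    using sum_lessThan_telescope[of "\<lambda>i. M (T (real i * h) y)" N] c0_contraction_semigroupD(1)[OF sg]
    by (simp add: linear_diff[OF M_lin])
  also have "\<dots> = (\<Sum>i<N. h *\<^sub>R M (T (real i * h) q))"
    by (rule sum.cong[OF refl]) (simp only: step linear_scale[OF M_lin])
  finally have telescope: "M (T (real N * h) y) - M y = (\<Sum>i<N. h *\<^sub>R M (T (real i * h) q))" .
  have "norm (M (T (real i * h) q)) \<le> b * norm y + norm (q - L y)" for i
    by (rule norm_comp_semigroup_near_generator[OF sg gen M M_contr bound_ML b y ih])
  then have "norm (M (T (real N * h) y) - M y) \<le> (\<Sum>i<N. h * (b * norm y + norm (q - L y)))"
    unfolding telescope using h by (intro order_trans[OF norm_sum] sum_mono) (simp add: mult_left_mono)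
  then show ?thesis
    by (simp add: q_def mult.assoc)
qed

lemma norm_comp_semigroup_diff_le_on_domain:
  assumes sg: "c0_contraction_semigroup T" and gen: "is_generator T D L"
    and M: "bounded_linear M" and M_contr: "\<And>x. norm (M x) \<le> norm x"
    and bound_ML: "\<forall>x\<in>D. norm (M (L x)) \<le> b * norm x" and b: "0 \<le> b"
    and y: "y \<in> D" and s: "0 \<le> s"
  shows "norm (M (T s y) - M y) \<le> s * b * norm y"
proof (cases "s = 0")
  case True
  then show ?thesis
    using c0_contraction_semigroupD(1)[OF sg] by simp
next
  case False
  define h where "h = (\<lambda>N::nat. s / real N)"
  define q where "q = (\<lambda>t. (1 / t) *\<^sub>R (T t y - y))"
  have "filterlim h (at_right 0) sequentially"
    unfolding filterlim_at h_def using False s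
    by (auto intro: lim_const_over_n eventually_sequentiallyI[of 1])
  moreover have "(q \<longlongrightarrow> L y) (at_right 0)"
    using gen y by (simp add: is_generator_def q_def)
  ultimately have "(\<lambda>N. q (h N)) \<longlonglongrightarrow> L y"
    by (rule filterlim_compose[rotated])
  then have "(\<lambda>N. s * (b * norm y + norm (q (h N) - L y))) \<longlonglongrightarrow> s * (b * norm y + norm (L y - L y))"
    by (intro tendsto_intros)
  moreover have "\<forall>\<^sub>F N in sequentially. norm (M (T s y) - M y) \<le> s * (b * norm y + norm (q (h N) - L y))"
  proof (rule eventually_sequentiallyI[of 1])
    fix N :: nat assume "1 \<le> N"
    then have "real N * h N = s" and "0 < h N"
      using False s by (auto simp: h_def)
    with norm_comp_semigroup_diff_riemann[OF sg gen M M_contr bound_ML b y, of "h N" N]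
    show "norm (M (T s y) - M y) \<le> s * (b * norm y + norm (q (h N) - L y))"
      by (simp add: q_def)
  qed
  ultimately have "norm (M (T s y) - M y) \<le> s * (b * norm y + norm (L y - L y))"
    by (rule tendsto_le[OF sequentially_bot _ tendsto_const])
  then show ?thesis
    by (simp add: mult.assoc)
qed

lemma norm_comp_semigroup_diff_le:
  assumes sg: "c0_contraction_semigroup T" and gen: "is_generator T D L"
    and M: "bounded_linear M" and M_contr: "\<And>x. norm (M x) \<le> norm x"
    and bound_ML: "\<forall>x\<in>D. norm (M (L x)) \<le> b * norm x" and b: "0 \<le> b"
    and dense: "closure D = UNIV" and s: "0 \<le> s"
  shows "norm (M (T s y) - M y) \<le> s * b * norm y"
proof -
  have "bounded_linear (\<lambda>x. M (T s x) - M x)"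
    using M c0_contraction_semigroupD(3)[OF sg s]
    by (intro bounded_linear_sub bounded_linear_compose[OF M] bounded_linear_ident)
  then have "continuous_on UNIV (\<lambda>x. norm (M (T s x) - M x))"
    by (intro continuous_on_norm linear_continuous_on)
  then have "closed {x. norm (M (T s x) - M x) \<le> s * b * norm x}"
    by (rule closed_Collect_le) (intro continuous_intros)
  moreover have "D \<subseteq> {x. norm (M (T s x) - M x) \<le> s * b * norm x}"
    using norm_comp_semigroup_diff_le_on_domain[OF sg gen M M_contr bound_ML b _ s] by blast
  ultimately have "closure D \<subseteq> {x. norm (M (T s x) - M x) \<le> s * b * norm x}"
    by (rule closure_minimal[rotated])
  then show ?thesis
    using dense by auto
qed

section \<open>Choice of the constants\<close>

lemma geometric_tail_ge:
  fixes d :: real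
  assumes "2 \<le> n" and "0 \<le> d" and "d < 1"
  shows "d \<le> (d - d ^ n) / (1 - d)"
proof -
  have "d ^ n \<le> d ^ 2"
    using assms by (intro power_decreasing) auto
  then show ?thesis
    using assms by (simp add: pos_le_divide_eq power2_eq_square algebra_simps)
qed

lemma perturbation_growth_le:
  fixes t b cp c2 R d :: real and n :: nat
  assumes n: "2 \<le> n" and t: "0 \<le> t" and b: "0 \<le> b" and d: "0 \<le> d" "d < 1"
    and R: "0 \<le> R" "R \<le> 2 * cp * c2 * d" and cp: "0 \<le> cp" "1 \<le> cp * c2"
  shows "R * (t / real n * b) * (1 + t / real n * b) ^ n
    \<le> (1 / real n) * (t * b * cp * c2 * (2 + t * b * cp * c2) * (d - d ^ n) / (1 - d))
      * exp (2 * t * b * cp * c2)"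
proof -
  define \<beta> where "\<beta> = t / real n * b"
  define z where "z = t * b * cp * c2"
  have \<beta>: "0 \<le> \<beta>"
    using t b by (simp add: \<beta>_def)
  have z: "0 \<le> z" "t * b \<le> z"
    using t b cp mult_left_mono[OF cp(2), of "t * b"] by (simp_all add: z_def mult.assoc)
  have "(1 + \<beta>) ^ n \<le> exp (t * b)"
    using exp_ge_one_plus_x_over_n_power_n[of n "t * b"] n mult_nonneg_nonneg[OF t b]
    by (simp add: \<beta>_def)
  also have "\<dots> \<le> exp (2 * z)"
    using z by simp
  finally have growth: "(1 + \<beta>) ^ n \<le> exp (2 * z)" .
  have "R * \<beta> \<le> \<beta> * (cp * c2) * (2 * d)"
    using R \<beta> mult_right_mono[OF R(2) \<beta>] by (simp add: algebra_simps)
  also have "\<dots> \<le> \<beta> * (cp * c2) * ((2 + z) * ((d - d ^ n) / (1 - d)))"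
    using geometric_tail_ge[OF n d] d z \<beta> cp by (intro mult_left_mono mult_mono) simp_all
  also have "\<dots> = (1 / real n) * (z * (2 + z) * (d - d ^ n) / (1 - d))"
    using n by (simp add: \<beta>_def z_def)
  finally have linear_part: "R * \<beta> \<le> (1 / real n) * (z * (2 + z) * (d - d ^ n) / (1 - d))" .
  moreover have "0 \<le> R * \<beta>"
    using R \<beta> by simp
  ultimately have "R * \<beta> * (1 + \<beta>) ^ n \<le> (1 / real n) * (z * (2 + z) * (d - d ^ n) / (1 - d)) * exp (2 * z)"
    using growth \<beta> by (intro mult_mono[OF linear_part growth]) simp_all
  then show ?thesis
    by (simp add: \<beta>_def z_def mult.assoc)
qed

lemma compression_rate_le:
  fixes C cp b \<delta> \<delta>' c2 t :: real and n :: nat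
  assumes C: "0 \<le> C" and cp: "cp = 0 \<or> 1 \<le> cp" and b: "0 \<le> b"
    and \<delta>: "0 \<le> \<delta>" "\<delta> < \<delta>'" "\<delta>' < 1"
    and c2: "1 \<le> c2" "2 * (C * cp) / (1 - \<delta>) \<le> 2 * cp * c2 * \<delta>'"
      "C * cp + 2 * (C * cp) / (1 - \<delta>) * b * (1 + b) \<le> c2 * \<delta>'"
    and t: "0 \<le> t" "t \<le> real n" and n: "1 \<le> n"
  shows "C * cp * \<delta> ^ n + 2 * (C * cp) / (1 - \<delta>) * (t / real n * b) * (1 + t / real n * b) ^ n
    \<le> c2 * \<delta>' ^ n + t * b / real n
      + (1 / real n) * (t * b * cp * c2 * (2 + t * b * cp * c2) * (\<delta>' - \<delta>' ^ n) / (1 - \<delta>'))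
        * exp (2 * t * b * cp * c2)"
proof -
  define R where "R = 2 * (C * cp) / (1 - \<delta>)"
  have cp0: "0 \<le> cp"
    using cp by auto
  have R0: "0 \<le> R"
    using C cp0 \<delta> by (simp add: R_def)
  show ?thesis
  proof (cases "n = 1")
    case True
    then have "t * b \<le> b"
      using t b mult_left_le_one_le[of b t] by simp
    then have "R * (t * b) * (1 + t * b) \<le> R * b * (1 + b)"
      using R0 t b by (intro mult_mono mult_left_mono) simp_all
    moreover have "C * cp * \<delta> \<le> C * cp"
      using C cp0 \<delta> by (intro mult_right_le_one_le) simp_all
    ultimately show ?thesis
      using True c2(3) mult_nonneg_nonneg[OF t(1) b] by (simp add: R_def)
  next
    case False
    with n have n2: "2 \<le> n" by simp
    have "C * cp \<le> C * cp + R * b * (1 + b)"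
      using R0 b by simp
    also have "\<dots> \<le> c2 * \<delta>'"
      using c2(3) by (simp add: R_def)
    also have "\<dots> \<le> c2"
      using c2(1) \<delta> by (simp add: mult_left_le_one_le)
    finally have "C * cp * \<delta> ^ n \<le> c2 * \<delta>' ^ n"
      using C cp0 \<delta> c2(1) by (intro mult_mono power_mono) simp_all
    moreover have "2 * (C * cp) / (1 - \<delta>) * (t / real n * b) * (1 + t / real n * b) ^ n
      \<le> (1 / real n) * (t * b * cp * c2 * (2 + t * b * cp * c2) * (\<delta>' - \<delta>' ^ n) / (1 - \<delta>'))
        * exp (2 * t * b * cp * c2)"
    proof (cases "cp = 0")
      case True
      then show ?thesis by simp
    next
      case False
      then have "1 \<le> cp * c2"
        using cp c2(1) mult_mono[of 1 cp 1 c2] by simp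
      with perturbation_growth_le[OF n2 t(1) b _ _ R0 c2(2)[folded R_def] cp0] \<delta> show ?thesis
        by (simp add: R_def)
    qed
    moreover have "0 \<le> t * b / real n"
      using t b by simp
    ultimately show ?thesis
      by linarith
  qed
qed

lemma compression_constant_exists:
  fixes C cp b \<delta> \<delta>' :: real
  assumes C: "0 \<le> C" and cp: "cp = 0 \<or> 1 \<le> cp" and b: "0 \<le> b"
    and \<delta>: "0 \<le> \<delta>" "\<delta> < \<delta>'" "\<delta>' < 1"
  shows "\<exists>c2\<ge>0. \<forall>t n. 0 \<le> t \<longrightarrow> 1 \<le> n \<longrightarrow> t \<le> real n \<longrightarrow>
    C * cp * \<delta> ^ n + 2 * (C * cp) / (1 - \<delta>) * (t / real n * b) * (1 + t / real n * b) ^ n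
      \<le> c2 * \<delta>' ^ n + t * b / real n
        + (1 / real n) * (t * b * cp * c2 * (2 + t * b * cp * c2) * (\<delta>' - \<delta>' ^ n) / (1 - \<delta>'))
          * exp (2 * t * b * cp * c2)"
proof -
  define R where "R = 2 * (C * cp) / (1 - \<delta>)"
  \<comment> \<open>The second bound gives \<open>R \<le> 2 cp c2 \<delta>'\<close>, used for \<open>n \<ge> 2\<close>; the third covers \<open>n = 1\<close>,
    where the last term of the estimate vanishes.\<close>
  define c2 where "c2 = max 1 (max (C / ((1 - \<delta>) * \<delta>')) ((C * cp + R * b * (1 + b)) / \<delta>'))"
  have cp0: "0 \<le> cp"
    using cp by auto
  have c2_ge_1: "1 \<le> c2"
    unfolding c2_def by (rule max.cobounded1)
  have "C / ((1 - \<delta>) * \<delta>') \<le> c2"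
    unfolding c2_def by (rule order_trans[OF max.cobounded1 max.cobounded2])
  then have "C / ((1 - \<delta>) * \<delta>') * \<delta>' \<le> c2 * \<delta>'"
    using \<delta> by (intro mult_right_mono) simp_all
  then have "C / (1 - \<delta>) \<le> c2 * \<delta>'"
    using \<delta> by simp
  then have c2_ge_R: "R \<le> 2 * cp * c2 * \<delta>'"
    using cp0 mult_left_mono[of "C / (1 - \<delta>)" "c2 * \<delta>'" "2 * cp"] by (simp add: R_def algebra_simps)
  have "(C * cp + R * b * (1 + b)) / \<delta>' \<le> c2"
    unfolding c2_def by (rule order_trans[OF max.cobounded2 max.cobounded2])
  then have c2_ge_n1: "C * cp + R * b * (1 + b) \<le> c2 * \<delta>'"
    using \<delta> by (simp add: pos_divide_le_eq)
  have "0 \<le> c2"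
    using c2_ge_1 by linarith
  with compression_rate_le[OF C cp b \<delta> c2_ge_1 c2_ge_R[unfolded R_def] c2_ge_n1[unfolded R_def]]
  show ?thesis
    by blast
qed

lemma spectral_estimate_pointwise:
  fixes M :: "'a::complex_normed_vector \<Rightarrow> 'a" and P :: "nat \<Rightarrow> 'a \<Rightarrow> 'a"
  assumes M: "bounded_linear M" and P: "\<And>j. j \<in> {1..J} \<Longrightarrow> bounded_linear (P j)"
    and spec: "\<forall>n\<ge>1. onorm (\<lambda>x. (M ^^ n) x - (\<Sum>j=1..J. scaleC (lam j ^ n) (P j x))) \<le> c * \<delta> ^ n"
    and n: "1 \<le> n"
  shows "norm ((M ^^ n) x - (\<Sum>j=1..J. scaleC (lam j ^ n) (P j x))) \<le> c * \<delta> ^ n * norm x"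
proof (rule onorm_le_imp_norm_le)
  show "bounded_linear (\<lambda>x. (M ^^ n) x - (\<Sum>j=1..J. scaleC (lam j ^ n) (P j x)))"
    by (intro bounded_linear_sub bounded_linear_funpow[OF M] bounded_linear_sum
        bounded_linear_compose[OF bounded_linear_scaleC] P)
  show "onorm (\<lambda>x. (M ^^ n) x - (\<Sum>j=1..J. scaleC (lam j ^ n) (P j x))) \<le> c * \<delta> ^ n"
    using spec n by blast
qed

lemma spectral_projection_compression:
  fixes M :: "'a::complex_normed_vector \<Rightarrow> 'a" and P :: "nat \<Rightarrow> 'a \<Rightarrow> 'a"
  assumes M_bop: "bop M" and M_contr: "onorm M \<le> 1"
    and spec: "\<exists>ct>0. \<forall>n\<ge>1. onorm (\<lambda>x. (M ^^ n) x - (\<Sum>j=1..J. scaleC (lam j ^ n) (P j x))) \<le> ct * \<delta> ^ n"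
    and P_bop: "\<forall>j\<in>{1..J}. bop (P j)"
    and P_orth: "\<forall>j\<in>{1..J}. \<forall>k\<in>{1..J}. P j \<circ> P k = (if j = k then P j else (\<lambda>x. 0))"
    and lam_abs: "\<forall>j\<in>{1..J}. cmod (lam j) = 1"
    and \<delta>: "0 < \<delta>" "\<delta> < 1"
    and PS_norm: "onorm PS = 1" and PS: "PS = (\<lambda>x. \<Sum>j=1..J. P j x)"
  obtains C where "0 \<le> C" and "bounded_linear PS" and "\<And>x. norm (PS x) \<le> norm x"
    and "\<And>y. PS (PS y) = PS y" and "\<And>y. PS (M (PS y)) = M (PS y)"
    and "onorm (\<lambda>x. x - PS x) = 0 \<or> 1 \<le> onorm (\<lambda>x. x - PS x)"
    and "\<And>n y. norm ((M ^^ n) y - (M ^^ n) (PS y)) \<le> C * onorm (\<lambda>x. x - PS x) * \<delta> ^ n * norm y"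
proof -
  obtain ct where ct: "0 < ct"
    and spec_ct: "\<forall>n\<ge>1. onorm (\<lambda>x. (M ^^ n) x - (\<Sum>j=1..J. scaleC (lam j ^ n) (P j x))) \<le> ct * \<delta> ^ n"
    using spec by blast
  have M_bl: "bounded_linear M"
    using M_bop by (simp add: bop_def)
  have M_le: "norm (M x) \<le> norm x" for x
    using onorm_le_imp_norm_le[OF M_bl M_contr] by simp
  have P_bl: "bounded_linear (P j)" if "j \<in> {1..J}" for j
    using P_bop that by (simp add: bop_def)
  have PS_bl: "bounded_linear PS"
    unfolding PS by (intro bounded_linear_sum P_bl)
  note spec_pointwise = spectral_estimate_pointwise[OF M_bl P_bl spec_ct]
  have PS_idem: "PS (PS y) = PS y" for y
    unfolding PS by (rule sum_orthogonal_projections_idem[OF P_bl P_orth])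
  have eigen: "M (P k x) = P k (scaleC (lam k) x)" if "k \<in> {1..J}" for k x
    using spectral_projection_eigen[OF M_bop M_le P_bl P_orth spec_pointwise _ _ _ that, of x] ct \<delta>
      lam_abs that P_bop by (simp add: bop_def)
  have Q_bl: "bounded_linear (\<lambda>x. x - PS x)"
    by (intro bounded_linear_sub bounded_linear_ident PS_bl)
  show thesis
  proof (rule that[of "max ct 1"])
    show "norm (PS x) \<le> norm x" for x
      using onorm_le_imp_norm_le[OF PS_bl, of 1 x] PS_norm by simp
    show "PS (M (PS y)) = M (PS y)" for y
      unfolding PS by (rule sum_projections_eigen_invariant[where f = "\<lambda>k. scaleC (lam k)",
          OF P_bl P_orth bounded_linear.linear[OF M_bl] eigen])
    show "onorm (\<lambda>x. x - PS x) = 0 \<or> 1 \<le> onorm (\<lambda>x. x - PS x)"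
      by (rule onorm_idempotent[OF Q_bl]) (simp add: PS_idem linear_diff[OF bounded_linear.linear[OF PS_bl]])
    show "norm ((M ^^ n) y - (M ^^ n) (PS y)) \<le> max ct 1 * onorm (\<lambda>x. x - PS x) * \<delta> ^ n * norm y"
      for n y
    proof -
      have "norm ((M ^^ n) y - (M ^^ n) (PS y)) \<le> max ct 1 * \<delta> ^ n * norm (y - PS y)"
        unfolding PS using \<delta> by (intro spectral_gap_on_complement[OF M_bl P_bl P_orth spec_pointwise]) simp_all
      also have "\<dots> \<le> max ct 1 * \<delta> ^ n * (onorm (\<lambda>x. x - PS x) * norm y)"
        using \<delta> onorm_le_imp_norm_le[OF Q_bl order_refl, of y] by (intro mult_left_mono) simp_all
      finally show ?thesis
        by (simp add: mult_ac)
    qed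
  qed (use PS_bl PS_idem in simp_all)
qed

lemma semigroup_compression_bound:
  fixes T :: "real \<Rightarrow> 'a::complex_normed_vector \<Rightarrow> 'a"
  assumes sg: "c0_contraction_semigroup T" and gen: "is_generator T D L"
    and M: "bounded_linear M" and M_contr: "\<And>x. norm (M x) \<le> norm x"
    and bound_ML: "\<forall>x\<in>D. norm (M (L x)) \<le> b * norm x" and b: "0 \<le> b"
    and dense: "closure D = UNIV"
    and PS: "bounded_linear PS" and PS_contr: "\<And>x. norm (PS x) \<le> norm x"
    and PS_idem: "\<And>y. PS (PS y) = PS y" and PS_inv: "\<And>y. PS (M (PS y)) = M (PS y)"
    and cp: "cp = 0 \<or> 1 \<le> cp"
    and gap: "\<And>j y. norm ((M ^^ j) y - (M ^^ j) (PS y)) \<le> C * cp * \<delta> ^ j * norm y"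
    and C: "0 \<le> C" and \<delta>: "0 \<le> \<delta>" "\<delta> < \<delta>'" "\<delta>' < 1"
  shows "\<exists>c2\<ge>0. \<forall>t n. 0 \<le> t \<and> 1 \<le> n \<and> t \<le> real n \<longrightarrow>
    onorm (\<lambda>x. ((M \<circ> T (t / real n)) ^^ n) x - ((PS \<circ> (M \<circ> T (t / real n)) \<circ> PS) ^^ n) x)
      \<le> c2 * \<delta>' ^ n + t * b / real n
        + (1 / real n) * (t * b * cp * c2 * (2 + t * b * cp * c2) * (\<delta>' - \<delta>' ^ n) / (1 - \<delta>'))
          * exp (2 * t * b * cp * c2)"
proof -
  have cp0: "0 \<le> cp"
    using cp by auto
  have compression: "onorm (\<lambda>x. ((M \<circ> T s) ^^ n) x - ((PS \<circ> (M \<circ> T s) \<circ> PS) ^^ n) x)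
      \<le> C * cp * \<delta> ^ n + 2 * (C * cp) / (1 - \<delta>) * (s * b) * (1 + s * b) ^ n" if s: "0 \<le> s" and n: "1 \<le> n"
    for s n
  proof (rule onorm_compression_funpow_diff_le[where M = M and X = "\<lambda>y. M (T s y) - M y"])
    show "bounded_linear (M \<circ> T s)"
      using bounded_linear_compose[OF M c0_contraction_semigroupD(3)[OF sg s]] by (simp add: comp_def)
    show "bounded_linear (\<lambda>y. M (T s y) - M y)"
      using c0_contraction_semigroupD(3)[OF sg s] by (intro bounded_linear_sub bounded_linear_compose[OF M] M)
    show "norm ((M \<circ> T s) y) \<le> norm y" for y
      using M_contr[of "T s y"] c0_contraction_semigroupD(4)[OF sg s, of y] by simp
    show "norm (M (T s y) - M y) \<le> s * b * norm y" for y
      by (rule norm_comp_semigroup_diff_le[OF sg gen M M_contr bound_ML b dense s])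
  qed (use PS PS_idem PS_inv M_contr PS_contr gap \<delta> s b n C cp0 in auto)
  from compression_constant_exists[OF C cp b \<delta>] obtain c2 where "0 \<le> c2"
    and "\<forall>t n. 0 \<le> t \<longrightarrow> 1 \<le> n \<longrightarrow> t \<le> real n \<longrightarrow>
      C * cp * \<delta> ^ n + 2 * (C * cp) / (1 - \<delta>) * (t / real n * b) * (1 + t / real n * b) ^ n
      \<le> c2 * \<delta>' ^ n + t * b / real n
        + (1 / real n) * (t * b * cp * c2 * (2 + t * b * cp * c2) * (\<delta>' - \<delta>' ^ n) / (1 - \<delta>'))
          * exp (2 * t * b * cp * c2)"
    by blast
  with compression show ?thesis
    by (meson order_trans divide_nonneg_nonneg of_nat_0_le_iff)
qed

theorem lemma6p3:
  fixes T :: "real \<Rightarrow> 'a::{complex_normed_vector, banach} \<Rightarrow> 'a"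
    and D :: "'a set" and L :: "'a \<Rightarrow> 'a"
    and M :: "'a \<Rightarrow> 'a"
    and P :: "nat \<Rightarrow> 'a \<Rightarrow> 'a" and lam :: "nat \<Rightarrow> complex"
    and J :: nat and \<delta> \<delta>' b :: real
  assumes sg: "c0_contraction_semigroup T"
    and gen: "is_generator T D L"
    and M_bop: "bop M" and M_contr: "onorm M \<le> 1"
    and spec: "\<exists>ct>0. \<forall>n\<ge>1. onorm (\<lambda>x. (M ^^ n) x - (\<Sum>j=1..J. scaleC (lam j ^ n) (P j x))) \<le> ct * \<delta> ^ n"
    and P_bop: "\<forall>j\<in>{1..J}. bop (P j)"
    and P_orth: "\<forall>j\<in>{1..J}. \<forall>k\<in>{1..J}. P j \<circ> P k = (if j = k then P j else (\<lambda>x. 0))"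
    and lam_abs: "\<forall>j\<in>{1..J}. cmod (lam j) = 1"
    and \<delta>: "0 < \<delta>" "\<delta> < 1"
    and b: "b \<ge> 0"
    and dense_dom_ML: "closure D = UNIV"
    and bound_ML: "\<forall>x\<in>D. norm (M (L x)) \<le> b * norm x"
    and dense_dom_LP: "closure {x. (\<Sum>j=1..J. P j x) \<in> D} = UNIV"
    and bound_LP: "\<forall>x. (\<Sum>j=1..J. P j x) \<in> D \<longrightarrow> norm (L (\<Sum>j=1..J. P j x)) \<le> b * norm x"
    and P_norm: "\<forall>j\<in>{1..J}. onorm (P j) = 1"
    and PS_norm: "onorm (\<lambda>x. \<Sum>j=1..J. P j x) = 1"
    and \<delta>': "\<delta> < \<delta>'" "\<delta>' < 1"
  shows "\<exists>\<epsilon>1>0. \<exists>c2\<ge>0. \<forall>t::real. \<forall>n::nat.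
           t \<ge> 0 \<and> n \<ge> 1 \<and> t \<le> real n * \<epsilon>1 \<longrightarrow>
           (let PS = (\<lambda>x. \<Sum>j=1..J. P j x);
                cp = onorm (\<lambda>x. x - PS x);
                Mt = M \<circ> T (t / real n)
            in onorm (\<lambda>x. (Mt ^^ n) x - ((PS \<circ> Mt \<circ> PS) ^^ n) x)
               \<le> c2 * \<delta>' ^ n + t * b / real n
                 + (1 / real n) * (t * b * cp * c2 * (2 + t * b * cp * c2) * (\<delta>' - \<delta>' ^ n) / (1 - \<delta>'))
                   * exp (2 * t * b * cp * c2))"
proof -
  define PS where "PS = (\<lambda>x. \<Sum>j=1..J. P j x)"
  obtain C where "0 \<le> C" and "bounded_linear PS" and "\<And>x. norm (PS x) \<le> norm x"
    and "\<And>y. PS (PS y) = PS y" and "\<And>y. PS (M (PS y)) = M (PS y)"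
    and "onorm (\<lambda>x. x - PS x) = 0 \<or> 1 \<le> onorm (\<lambda>x. x - PS x)"
    and "\<And>n y. norm ((M ^^ n) y - (M ^^ n) (PS y)) \<le> C * onorm (\<lambda>x. x - PS x) * \<delta> ^ n * norm y"
    using spectral_projection_compression[OF M_bop M_contr spec P_bop P_orth lam_abs \<delta> _ PS_def] PS_norm PS_def
    by blast
  moreover have "bounded_linear M" and "norm (M x) \<le> norm x" for x
    using M_bop onorm_le_imp_norm_le[of M 1 x] M_contr by (simp_all add: bop_def)
  ultimately have "\<exists>c2\<ge>0. \<forall>t n. 0 \<le> t \<and> 1 \<le> n \<and> t \<le> real n \<longrightarrow>
    onorm (\<lambda>x. ((M \<circ> T (t / real n)) ^^ n) x - ((PS \<circ> (M \<circ> T (t / real n)) \<circ> PS) ^^ n) x)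
      \<le> c2 * \<delta>' ^ n + t * b / real n
        + (1 / real n) * (t * b * onorm (\<lambda>x. x - PS x) * c2 * (2 + t * b * onorm (\<lambda>x. x - PS x) * c2)
          * (\<delta>' - \<delta>' ^ n) / (1 - \<delta>')) * exp (2 * t * b * onorm (\<lambda>x. x - PS x) * c2)"
    using \<delta> \<delta>' by (intro semigroup_compression_bound[OF sg gen _ _ bound_ML b dense_dom_ML]) auto
  then show ?thesis
    unfolding Let_def PS_def by (intro exI[of _ "1::real"]) auto
qed

end
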